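(* Let $(\mathcal{S},\mathcal{A},P,r)$ be an MDP with finite state and action spaces and $r\in[0,1]$, and let $\widehat P$ be the empirical kernel formed from $n$ i.i.d. samples $S^1_{s,a},\dots,S^n_{s,a}\sim P(\cdot\mid s,a)$ for each $(s,a)$. Fix $\gamma\in(0,1)$, $M>0$ and $s\in\mathcal{S}$. For $u\in[0,1]$, let $\widehat V^{(s,u)}_{\gamma,M}$ be the unique fixed point of $\mathrm{Clip}_M\circ\widehat{\mathcal{T}}^{(s,u)}_\gamma$ and let $\widehat V^\star_{\gamma,M}$ be the unique fixed point of $\mathrm{Clip}_M\circ\widehat{\mathcal{T}}_\gamma$. Then: (i) for any $u,u'\in[0,1]$, $\|\widehat V^{(s,u)}_{\gamma,M}-\widehat V^{(s,u')}_{\gamma,M}\|_\infty\le\frac{|u-u'|}{1-\gamma}$; (ii) with $u^\star(s)=\widehat{\mathcal{T}}_\gamma(\widehat V^\star_{\gamma,M})(s)-\gamma\widehat V^\star_{\gamma,M}(s)$, we have $u^\star(s)\in[0,1]$ and $\widehat V^{(s,u^\star(s))}_{\gamma,M}=\widehat V^\star_{\gamma,M}$; (iii) for any $\varepsilon>0$ there is a finite set $U\subset[0,1]$ with $|U|=\lceil\frac1{2(1-\gamma)\varepsilon}\rceil$ such that almost surely, for every $s\in\mathcal{S}$ there exists $u\in U$ with $\|\widehat V^\star_{\gamma,M}-\widehat V^{(s,u)}_{\gamma,M}\|_\infty\le\varepsilon$; (iv) for any $u\in[0,1]$ and $a\in\mathcal{A}$, $\widehat V^{(s,u)}_{\gamma,M}$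 is independent of the samples $S^1_{s,a},\dots,S^n_{s,a}$.
   Context: $\widehat{\mathcal{T}}_\gamma(x)(s')=\max_a\big(r(s',a)+\gamma\sum_{s''}\widehat P(s''\mid s',a)x(s'')\big)$. $\widehat P^{(s)}$ equals $\widehat P$ except that $s$ is absorbing: $\widehat P^{(s)}(\cdot\mid s'',a)=\widehat P(\cdot\mid s'',a)$ for $s''\ne s$ and $\widehat P^{(s)}(s\mid s,a)=1$. $r^{(s,u)}$ equals $r$ except $r^{(s,u)}(s,a)=u$ for all $a$. $\widehat{\mathcal{T}}^{(s,u)}_\gamma(x)(s')=\max_a\big(r^{(s,u)}(s',a)+\gamma\sum_{s''}\widehat P^{(s)}(s''\mid s',a)x(s'')\big)$. $\mathrm{Clip}_M(V)=\min\{V,(M+\min_{s'}V(s'))\mathbf 1\}$ elementwise; $\mathrm{Clip}_M$ composed with a $\gamma$-discounted Bellman operator is a $\gamma$-contraction in $\|\cdot\|_\infty$, so these fixed points exist and are unique. *)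

theory Defs
  imports "HOL-Probability.Probability"
begin

text \<open>Sample functions: omega (s,a,i) is the i-th sample drawn from P(.|s,a), i < n.\<close>

definition emp_kernel :: "nat \<Rightarrow> ('s \<times> 'a \<times> nat \<Rightarrow> 's) \<Rightarrow> 's \<Rightarrow> 'a \<Rightarrow> 's \<Rightarrow> real" where
  "emp_kernel n \<omega> s a s' = real (card {i. i < n \<and> \<omega> (s, a, i) = s'}) / real n"

definition samples_pmf :: "nat \<Rightarrow> ('s::finite \<Rightarrow> 'a::finite \<Rightarrow> 's pmf) \<Rightarrow> ('s \<times> 'a \<times> nat \<Rightarrow> 's) pmf" where
  "samples_pmf n P = Pi_pmf {(s, a, i). i < n} undefined (\<lambda>(s, a, i). P s a)"

definition bellman :: "('s::finite \<Rightarrow> 'a::finite \<Rightarrow> real) \<Rightarrow> ('s \<Rightarrow> 'a \<Rightarrow> 's \<Rightarrow> real) \<Rightarrow> real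
    \<Rightarrow> ('s \<Rightarrow> real) \<Rightarrow> 's \<Rightarrow> real" where
  "bellman r Q \<gamma> x s' = (MAX a. r s' a + \<gamma> * (\<Sum>s''\<in>UNIV. Q s' a s'' * x s''))"

definition absorb_kernel :: "('s \<Rightarrow> 'a \<Rightarrow> 's \<Rightarrow> real) \<Rightarrow> 's \<Rightarrow> 's \<Rightarrow> 'a \<Rightarrow> 's \<Rightarrow> real" where
  "absorb_kernel Q s = (\<lambda>s'' a t. if s'' = s then (if t = s then 1 else 0) else Q s'' a t)"

definition mod_reward :: "('s \<Rightarrow> 'a \<Rightarrow> real) \<Rightarrow> 's \<Rightarrow> real \<Rightarrow> 's \<Rightarrow> 'a \<Rightarrow> real" where
  "mod_reward r s u = (\<lambda>s' a. if s' = s then u else r s' a)"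

definition clip :: "real \<Rightarrow> ('s::finite \<Rightarrow> real) \<Rightarrow> 's \<Rightarrow> real" where
  "clip M V = (\<lambda>s'. min (V s') (M + (MIN t. V t)))"

definition clipped_fix :: "real \<Rightarrow> (('s::finite \<Rightarrow> real) \<Rightarrow> ('s \<Rightarrow> real)) \<Rightarrow> 's \<Rightarrow> real" where
  "clipped_fix M T = (THE V. clip M (T V) = V)"

definition supnorm :: "('s::finite \<Rightarrow> real) \<Rightarrow> real" where
  "supnorm f = (MAX x. \<bar>f x\<bar>)"

definition V_su :: "nat \<Rightarrow> ('s::finite \<Rightarrow> 'a::finite \<Rightarrow> real) \<Rightarrow> real \<Rightarrow> real
    \<Rightarrow> ('s \<times> 'a \<times> nat \<Rightarrow> 's) \<Rightarrow> 's \<Rightarrow> real \<Rightarrow> 's \<Rightarrow> real" where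
  "V_su n r \<gamma> M \<omega> s u =
     clipped_fix M (bellman (mod_reward r s u) (absorb_kernel (emp_kernel n \<omega>) s) \<gamma>)"

definition V_star :: "nat \<Rightarrow> ('s::finite \<Rightarrow> 'a::finite \<Rightarrow> real) \<Rightarrow> real \<Rightarrow> real
    \<Rightarrow> ('s \<times> 'a \<times> nat \<Rightarrow> 's) \<Rightarrow> 's \<Rightarrow> real" where
  "V_star n r \<gamma> M \<omega> = clipped_fix M (bellman r (emp_kernel n \<omega>) \<gamma>)"

end

theory Submission
  imports Defs
begin

text \<open>
  Clipping is 1-Lipschitz in the sup norm, so for every stochastic kernel the clipped Bellman
  operator is a \<open>\<gamma>\<close>-contraction and has a unique fixed point, which moves by at most
  \<open>c / (1 - \<gamma>)\<close> when the reward moves by \<open>c\<close>; this gives (i).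
  On the absorbing state \<open>s\<close> the modified operator returns \<open>u + \<gamma> V(s)\<close> and elsewhere it
  agrees with the original one, so for \<open>u = T(V\<^sup>\<star>)(s) - \<gamma> V\<^sup>\<star>(s)\<close> the fixed point \<open>V\<^sup>\<star>\<close>
  is also a fixed point of the modified operator. Rewards in \<open>[0,1]\<close> give
  \<open>0 \<le> V\<^sup>\<star> \<le> 1 / (1 - \<gamma>)\<close> and \<open>T(V\<^sup>\<star>)(s) \<le> 1 + \<gamma> max V\<^sup>\<star>\<close>; if the clipping is inactive at \<open>s\<close> then
  \<open>u = (1 - \<gamma>) T(V\<^sup>\<star>)(s)\<close>, and if it is active then \<open>V\<^sup>\<star>(s) = max V\<^sup>\<star>\<close>, so in both cases
  \<open>u \<in> [0,1]\<close>, which is (ii). Part (iii) follows by approximating \<open>u\<close> with the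
  midpoints of a uniform partition of \<open>[0,1]\<close> into \<open>\<lceil>1 / (2 (1 - \<gamma>) \<epsilon>)\<rceil>\<close> cells and applying (i).
  For (iv), the absorbing kernel never reads the samples drawn at \<open>s\<close>, and in a product
  distribution functions of disjoint sets of coordinates are independent.
\<close>

lemma abs_le_supnorm: "\<bar>f x\<bar> \<le> supnorm f"
  unfolding supnorm_def by (rule Max_ge) auto

lemma supnorm_le_iff: "supnorm f \<le> c \<longleftrightarrow> (\<forall>x. \<bar>f x\<bar> \<le> c)"
  unfolding supnorm_def by (subst Max_le_iff) auto

lemma supnorm_zero [simp]: "supnorm (\<lambda>_. 0) = 0"
  unfolding supnorm_def by simp

lemma supnorm_nonneg: "0 \<le> supnorm f"
  using abs_le_supnorm[of f undefined] by linarith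

lemma tendsto_supnorm_zero:
  fixes X :: "nat \<Rightarrow> 's::finite \<Rightarrow> real"
  assumes "\<And>t. (\<lambda>k. X k t) \<longlonglongrightarrow> 0"
  shows "(\<lambda>k. supnorm (X k)) \<longlonglongrightarrow> 0"
proof (rule Lim_null_comparison)
  show "\<forall>\<^sub>F k in sequentially. norm (supnorm (X k)) \<le> (\<Sum>t\<in>UNIV. \<bar>X k t\<bar>)"
    by (intro always_eventually allI)
       (auto simp: supnorm_nonneg supnorm_le_iff intro!: member_le_sum)
  show "(\<lambda>k. \<Sum>t\<in>UNIV. \<bar>X k t\<bar>) \<longlonglongrightarrow> 0"
    using tendsto_sum[of UNIV "\<lambda>t k. \<bar>X k t\<bar>" "\<lambda>_. 0"] assms
    by (simp add: tendsto_rabs_zero)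
qed

definition supnorm_contraction :: "real \<Rightarrow> (('s::finite \<Rightarrow> real) \<Rightarrow> 's \<Rightarrow> real) \<Rightarrow> bool" where
  "supnorm_contraction \<gamma> F \<longleftrightarrow>
     (\<forall>x y. supnorm (\<lambda>t. F x t - F y t) \<le> \<gamma> * supnorm (\<lambda>t. x t - y t))"

lemma contraction_fixpoint_dist_le:
  assumes F: "supnorm_contraction \<gamma> F" and "\<gamma> < 1"
    and V: "F V = V" and W: "G W = W"
    and c: "supnorm (\<lambda>t. F W t - G W t) \<le> c"
  shows "supnorm (\<lambda>t. V t - W t) \<le> c / (1 - \<gamma>)"
proof -
  let ?S = "supnorm (\<lambda>t. V t - W t)"
  have "\<bar>V t - W t\<bar> \<le> \<gamma> * ?S + c" for t
  proof -
    have "V t - W t = (F V t - F W t) + (F W t - G W t)"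
      using fun_cong[OF V, of t] fun_cong[OF W, of t] by simp
    moreover have "\<bar>F V t - F W t\<bar> \<le> \<gamma> * ?S"
      using F abs_le_supnorm[of "\<lambda>t. F V t - F W t" t] unfolding supnorm_contraction_def
      by (meson order_trans)
    moreover have "\<bar>F W t - G W t\<bar> \<le> c"
      using c abs_le_supnorm[of "\<lambda>t. F W t - G W t" t] by simp
    ultimately show ?thesis by linarith
  qed
  then have "?S \<le> \<gamma> * ?S + c"
    by (simp add: supnorm_le_iff)
  then show ?thesis
    using \<open>\<gamma> < 1\<close> by (simp add: pos_le_divide_eq algebra_simps)
qed

lemma contraction_fixpoint_unique:
  assumes "supnorm_contraction \<gamma> F" "\<gamma> < 1" "F V = V" "F W = W"
  shows "V = W"
proof -
  have "supnorm (\<lambda>t. V t - W t) \<le> 0"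
    using contraction_fixpoint_dist_le[of \<gamma> F V F W 0] assms by simp
  then show ?thesis
    by (auto simp: supnorm_le_iff fun_eq_iff)
qed

lemma supnorm_contraction_tendsto:
  assumes F: "supnorm_contraction \<gamma> F" and x: "\<And>t. (\<lambda>k. x k t) \<longlonglongrightarrow> L t"
  shows "(\<lambda>k. F (x k) t) \<longlonglongrightarrow> F L t"
proof -
  have "(\<lambda>k. supnorm (\<lambda>t. x k t - L t)) \<longlonglongrightarrow> 0"
    using x by (intro tendsto_supnorm_zero) (simp add: LIM_zero)
  then have "(\<lambda>k. \<gamma> * supnorm (\<lambda>t. x k t - L t)) \<longlonglongrightarrow> 0"
    by (rule tendsto_mult_right_zero)
  then have "(\<lambda>k. F (x k) t - F L t) \<longlonglongrightarrow> 0"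
  proof (rule Lim_null_comparison[rotated], intro always_eventually allI)
    fix k
    show "norm (F (x k) t - F L t) \<le> \<gamma> * supnorm (\<lambda>t. x k t - L t)"
      using F abs_le_supnorm[of "\<lambda>t. F (x k) t - F L t" t] unfolding supnorm_contraction_def
      by (metis order_trans real_norm_def)
  qed
  then show ?thesis
    by (simp add: LIM_zero_iff)
qed

lemma contraction_iterates_converge:
  assumes F: "supnorm_contraction \<gamma> F" and \<gamma>: "0 \<le> \<gamma>" "\<gamma> < 1"
  shows "\<exists>L. \<forall>t. (\<lambda>k. (F ^^ k) x0 t) \<longlonglongrightarrow> L t"
proof -
  define x where "x k = (F ^^ k) x0" for k
  have step_le: "supnorm (\<lambda>t. x (Suc k) t - x k t) \<le> \<gamma> ^ k * supnorm (\<lambda>t. x 1 t - x 0 t)" for k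
  proof (induction k)
    case (Suc k)
    have "supnorm (\<lambda>t. x (Suc (Suc k)) t - x (Suc k) t) \<le> \<gamma> * supnorm (\<lambda>t. x (Suc k) t - x k t)"
      using F by (simp add: supnorm_contraction_def x_def)
    also have "\<dots> \<le> \<gamma> * (\<gamma> ^ k * supnorm (\<lambda>t. x 1 t - x 0 t))"
      using Suc \<gamma>(1) by (rule mult_left_mono)
    finally show ?case by simp
  qed simp
  have summable_steps: "summable (\<lambda>k. x (Suc k) t - x k t)" for t
  proof (rule summable_comparison_test)
    have "norm (x (Suc k) t - x k t) \<le> \<gamma> ^ k * supnorm (\<lambda>t. x 1 t - x 0 t)" for k
      using abs_le_supnorm[of "\<lambda>t. x (Suc k) t - x k t" t] step_le[of k] by simp
    then show "\<exists>N. \<forall>k\<ge>N. norm (x (Suc k) t - x k t) \<le> \<gamma> ^ k * supnorm (\<lambda>t. x 1 t - x 0 t)"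
      by blast
    show "summable (\<lambda>k. \<gamma> ^ k * supnorm (\<lambda>t. x 1 t - x 0 t))"
      using \<gamma> by (intro summable_mult2 summable_geometric) auto
  qed
  define L where "L t = x 0 t + (\<Sum>j. x (Suc j) t - x j t)" for t
  have "(\<lambda>k. x k t) \<longlonglongrightarrow> L t" for t
  proof -
    have "(\<lambda>k. x 0 t + (\<Sum>j<k. x (Suc j) t - x j t)) \<longlonglongrightarrow> L t"
      unfolding L_def by (intro tendsto_add tendsto_const summable_LIMSEQ summable_steps)
    then show ?thesis
      by (simp add: sum_lessThan_telescope[of "\<lambda>k. x k t"])
  qed
  then show ?thesis
    unfolding x_def by blast
qed

lemma contraction_has_fixpoint:
  assumes F: "supnorm_contraction \<gamma> F" and \<gamma>: "0 \<le> \<gamma>" "\<gamma> < 1"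
  shows "\<exists>V. F V = V"
proof -
  obtain L where L: "\<And>t. (\<lambda>k. (F ^^ k) (\<lambda>_. 0) t) \<longlonglongrightarrow> L t"
    using contraction_iterates_converge[OF assms] by blast
  have "(\<lambda>k. (F ^^ Suc k) (\<lambda>_. 0) t) \<longlonglongrightarrow> F L t" for t
    using supnorm_contraction_tendsto[OF F L] by simp
  then have "F L t = L t" for t
    using LIMSEQ_unique LIMSEQ_Suc[OF L] by blast
  then show ?thesis
    by blast
qed

lemma contraction_ex1_fixpoint:
  assumes "supnorm_contraction \<gamma> F" "0 \<le> \<gamma>" "\<gamma> < 1"
  shows "\<exists>!V. F V = V"
  using contraction_has_fixpoint[OF assms] contraction_fixpoint_unique[OF assms(1,3)] by auto

lemma clipped_fix_eq:
  assumes "supnorm_contraction \<gamma> (\<lambda>V. clip M (T V))" "0 \<le> \<gamma>" "\<gamma> < 1"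
  shows "clip M (T (clipped_fix M T)) = clipped_fix M T"
  unfolding clipped_fix_def using contraction_ex1_fixpoint[OF assms] by (rule theI')

lemma clipped_fix_unique:
  assumes "supnorm_contraction \<gamma> (\<lambda>V. clip M (T V))" "0 \<le> \<gamma>" "\<gamma> < 1"
    and "clip M (T V) = V"
  shows "clipped_fix M T = V"
  using contraction_fixpoint_unique[OF assms(1,3) clipped_fix_eq[OF assms(1-3)] assms(4)] .

lemma abs_Max_diff_le:
  fixes f g :: "'a::finite \<Rightarrow> real"
  assumes "\<And>a. \<bar>f a - g a\<bar> \<le> c"
  shows "\<bar>(MAX a. f a) - (MAX a. g a)\<bar> \<le> c"
proof -
  have "(MAX a. f a) \<in> range f" "(MAX a. g a) \<in> range g"
    by simp_all
  then obtain a b where a: "(MAX a. f a) = f a" and b: "(MAX a. g a) = g b"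
    by blast
  have "g a \<le> (MAX a. g a)" "f b \<le> (MAX a. f a)"
    by simp_all
  then show ?thesis
    using assms[of a] assms[of b] a b by linarith
qed

lemma abs_Min_diff_le:
  fixes f g :: "'a::finite \<Rightarrow> real"
  assumes "\<And>a. \<bar>f a - g a\<bar> \<le> c"
  shows "\<bar>(MIN a. f a) - (MIN a. g a)\<bar> \<le> c"
proof -
  have "(MIN a. f a) \<in> range f" "(MIN a. g a) \<in> range g"
    by simp_all
  then obtain a b where a: "(MIN a. f a) = f a" and b: "(MIN a. g a) = g b"
    by blast
  have "(MIN a. g a) \<le> g a" "(MIN a. f a) \<le> f b"
    by simp_all
  then show ?thesis
    using assms[of a] assms[of b] a b by linarith
qed

lemma supnorm_clip_diff_le:
  "supnorm (\<lambda>t. clip M V t - clip M W t) \<le> supnorm (\<lambda>t. V t - W t)"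
proof -
  have Min_diff: "\<bar>(MIN t. V t) - (MIN t. W t)\<bar> \<le> supnorm (\<lambda>t. V t - W t)"
    using abs_le_supnorm[of "\<lambda>t. V t - W t"] by (intro abs_Min_diff_le) simp
  show ?thesis
    unfolding supnorm_le_iff
  proof
    fix t
    have "\<bar>V t - W t\<bar> \<le> supnorm (\<lambda>t. V t - W t)"
      using abs_le_supnorm[of "\<lambda>t. V t - W t" t] by simp
    with Min_diff show "\<bar>clip M V t - clip M W t\<bar> \<le> supnorm (\<lambda>t. V t - W t)"
      by (auto simp: clip_def min_def abs_le_iff)
  qed
qed

definition stochastic_kernel :: "('s::finite \<Rightarrow> 'a \<Rightarrow> 's \<Rightarrow> real) \<Rightarrow> bool" where
  "stochastic_kernel Q \<longleftrightarrow> (\<forall>t a t'. 0 \<le> Q t a t') \<and> (\<forall>t a. (\<Sum>t'\<in>UNIV. Q t a t') = 1)"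

lemma stochastic_kernel_emp_kernel:
  assumes "n > 0"
  shows "stochastic_kernel (emp_kernel n \<omega>)"
proof -
  have "(\<Sum>t'\<in>UNIV. card {i. i < n \<and> \<omega> (t, a, i) = t'}) = n" for t a
    using sum.group[of "{..<n}" UNIV "\<lambda>i. \<omega> (t, a, i)" "\<lambda>_. 1::nat"]
    by (simp add: card_eq_sum[symmetric])
  then have "(\<Sum>t'\<in>UNIV. real (card {i. i < n \<and> \<omega> (t, a, i) = t'})) = real n" for t a
    by (simp flip: of_nat_sum)
  then show ?thesis
    using assms unfolding stochastic_kernel_def emp_kernel_def
    by (simp add: sum_divide_distrib[symmetric])
qed

lemma stochastic_kernel_absorb_kernel:
  assumes "stochastic_kernel Q"
  shows "stochastic_kernel (absorb_kernel Q s)"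
proof -
  have "(\<Sum>t'\<in>UNIV. absorb_kernel Q s t a t') = 1" for t a
    using assms by (cases "t = s") (simp_all add: absorb_kernel_def stochastic_kernel_def)
  moreover have "0 \<le> absorb_kernel Q s t a t'" for t a t'
    using assms by (simp add: absorb_kernel_def stochastic_kernel_def)
  ultimately show ?thesis
    unfolding stochastic_kernel_def by blast
qed

lemma kernel_avg_ge:
  assumes "stochastic_kernel Q" "\<And>t'. lo \<le> z t'"
  shows "lo \<le> (\<Sum>t'\<in>UNIV. Q t a t' * z t')"
proof -
  have "lo = (\<Sum>t'\<in>UNIV. Q t a t' * lo)"
    using assms(1) by (simp add: stochastic_kernel_def flip: sum_distrib_right)
  also have "\<dots> \<le> (\<Sum>t'\<in>UNIV. Q t a t' * z t')"
    using assms by (intro sum_mono mult_left_mono) (auto simp: stochastic_kernel_def)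
  finally show ?thesis .
qed

lemma kernel_avg_le:
  assumes "stochastic_kernel Q" "\<And>t'. z t' \<le> hi"
  shows "(\<Sum>t'\<in>UNIV. Q t a t' * z t') \<le> hi"
proof -
  have "(\<Sum>t'\<in>UNIV. Q t a t' * z t') \<le> (\<Sum>t'\<in>UNIV. Q t a t' * hi)"
    using assms by (intro sum_mono mult_left_mono) (auto simp: stochastic_kernel_def)
  also have "\<dots> = hi"
    using assms(1) by (simp add: stochastic_kernel_def flip: sum_distrib_right)
  finally show ?thesis .
qed

lemma abs_kernel_avg_le_supnorm:
  assumes "stochastic_kernel Q"
  shows "\<bar>\<Sum>t'\<in>UNIV. Q t a t' * z t'\<bar> \<le> supnorm z"
proof -
  have "- supnorm z \<le> z t'" "z t' \<le> supnorm z" for t'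
    using abs_le_supnorm[of z t'] by (simp_all add: abs_le_iff)
  then show ?thesis
    using kernel_avg_ge[OF assms, of "- supnorm z" z t a] kernel_avg_le[OF assms, of z "supnorm z" t a]
    by (simp add: abs_le_iff)
qed

lemma abs_bellman_diff_le:
  assumes Q: "stochastic_kernel Q" and "0 \<le> \<gamma>" and r: "\<And>a. \<bar>r t a - r' t a\<bar> \<le> c"
  shows "\<bar>bellman r Q \<gamma> x t - bellman r' Q \<gamma> y t\<bar> \<le> c + \<gamma> * supnorm (\<lambda>t. x t - y t)"
  unfolding bellman_def
proof (rule abs_Max_diff_le)
  fix a
  let ?X = "\<Sum>t'\<in>UNIV. Q t a t' * x t'" and ?Y = "\<Sum>t'\<in>UNIV. Q t a t' * y t'"
  have "\<bar>?X - ?Y\<bar> \<le> supnorm (\<lambda>t. x t - y t)"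
    using abs_kernel_avg_le_supnorm[OF Q, of t a "\<lambda>t. x t - y t"]
    by (simp add: sum_subtractf right_diff_distrib)
  then have "\<bar>\<gamma> * (?X - ?Y)\<bar> \<le> \<gamma> * supnorm (\<lambda>t. x t - y t)"
    using \<open>0 \<le> \<gamma>\<close> by (simp add: abs_mult mult_left_mono)
  then show "\<bar>r t a + \<gamma> * ?X - (r' t a + \<gamma> * ?Y)\<bar> \<le> c + \<gamma> * supnorm (\<lambda>t. x t - y t)"
    using r[of a] abs_triangle_ineq[of "r t a - r' t a" "\<gamma> * (?X - ?Y)"]
    by (simp add: algebra_simps)
qed

lemma supnorm_contraction_clip_bellman:
  assumes "stochastic_kernel Q" "0 \<le> \<gamma>"
  shows "supnorm_contraction \<gamma> (\<lambda>V. clip M (bellman r Q \<gamma> V))"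
  unfolding supnorm_contraction_def
proof (intro allI)
  fix x y
  have "supnorm (\<lambda>t. bellman r Q \<gamma> x t - bellman r Q \<gamma> y t) \<le> \<gamma> * supnorm (\<lambda>t. x t - y t)"
    using abs_bellman_diff_le[OF assms, of r _ r 0 x y] by (simp add: supnorm_le_iff)
  then show "supnorm (\<lambda>t. clip M (bellman r Q \<gamma> x) t - clip M (bellman r Q \<gamma> y) t)
      \<le> \<gamma> * supnorm (\<lambda>t. x t - y t)"
    by (rule order_trans[OF supnorm_clip_diff_le])
qed

lemma clipped_fix_bellman_reward_lipschitz:
  assumes Q: "stochastic_kernel Q" and \<gamma>: "0 \<le> \<gamma>" "\<gamma> < 1"
    and r: "\<And>t a. \<bar>r t a - r' t a\<bar> \<le> c"
  shows "supnorm (\<lambda>t. clipped_fix M (bellman r Q \<gamma>) t - clipped_fix M (bellman r' Q \<gamma>) t)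
    \<le> c / (1 - \<gamma>)"
proof -
  have contr: "supnorm_contraction \<gamma> (\<lambda>V. clip M (bellman \<rho> Q \<gamma> V))" for \<rho> :: "_ \<Rightarrow> _ \<Rightarrow> real"
    using Q \<gamma>(1) by (rule supnorm_contraction_clip_bellman)
  have "supnorm (\<lambda>t. bellman r Q \<gamma> W t - bellman r' Q \<gamma> W t) \<le> c" for W
    using abs_bellman_diff_le[OF Q \<gamma>(1), of r _ r' c W W] r by (simp add: supnorm_le_iff)
  then have "supnorm (\<lambda>t. clip M (bellman r Q \<gamma> W) t - clip M (bellman r' Q \<gamma> W) t) \<le> c" for W
    by (rule order_trans[OF supnorm_clip_diff_le])
  then show ?thesis
    using contraction_fixpoint_dist_le[where G = "\<lambda>V. clip M (bellman r' Q \<gamma> V)",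
        OF contr \<gamma>(2) clipped_fix_eq[OF contr \<gamma>] clipped_fix_eq[OF contr \<gamma>]]
    by blast
qed

lemma bellman_ge:
  assumes "stochastic_kernel Q" "0 \<le> \<gamma>" "\<And>t a. 0 \<le> r t a" "\<And>t'. lo \<le> x t'"
  shows "\<gamma> * lo \<le> bellman r Q \<gamma> x t"
proof -
  have "lo \<le> (\<Sum>t'\<in>UNIV. Q t a t' * x t')" for a
    using assms(1,4) by (rule kernel_avg_ge)
  then have "\<gamma> * lo \<le> \<gamma> * (\<Sum>t'\<in>UNIV. Q t a t' * x t')" for a
    using assms(2) by (rule mult_left_mono)
  then have "\<gamma> * lo \<le> r t a + \<gamma> * (\<Sum>t'\<in>UNIV. Q t a t' * x t')" for a
    using assms(3)[of t a] by (simp add: add_increasing)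
  then show ?thesis
    unfolding bellman_def by (auto simp: Max_ge_iff)
qed

lemma bellman_le:
  assumes "stochastic_kernel Q" "0 \<le> \<gamma>" "\<And>t a. r t a \<le> 1" "\<And>t'. x t' \<le> hi"
  shows "bellman r Q \<gamma> x t \<le> 1 + \<gamma> * hi"
proof -
  have "(\<Sum>t'\<in>UNIV. Q t a t' * x t') \<le> hi" for a
    using assms(1,4) by (rule kernel_avg_le)
  then have "\<gamma> * (\<Sum>t'\<in>UNIV. Q t a t' * x t') \<le> \<gamma> * hi" for a
    using assms(2) by (rule mult_left_mono)
  then have "r t a + \<gamma> * (\<Sum>t'\<in>UNIV. Q t a t' * x t') \<le> 1 + \<gamma> * hi" for a
    using assms(3)[of t a] by (simp add: add_mono)
  then show ?thesis
    unfolding bellman_def by (simp add: Max_le_iff)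
qed

lemma clip_bellman_fixpoint_nonneg:
  assumes Q: "stochastic_kernel Q" and \<gamma>: "0 \<le> \<gamma>" "\<gamma> < 1" and "0 \<le> M"
    and r: "\<And>t a. 0 \<le> r t a" and V: "clip M (bellman r Q \<gamma> V) = V"
  shows "0 \<le> V t"
proof -
  have "(MIN t. V t) \<in> range V"
    by simp
  then obtain t0 where t0: "(MIN t. V t) = V t0"
    by blast
  then have V_ge: "V t0 \<le> V t" for t
    using t0[symmetric] by simp
  have "\<gamma> * V t0 \<le> bellman r Q \<gamma> V t" for t
    using Q \<gamma>(1) r V_ge by (rule bellman_ge)
  then have "\<gamma> * V t0 \<le> clip M (bellman r Q \<gamma> V) t0"
    using \<open>0 \<le> M\<close> by (simp add: clip_def Min_ge_iff add_increasing)
  then have "0 \<le> (1 - \<gamma>) * V t0"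
    using V by (simp add: left_diff_distrib)
  then have "0 \<le> V t0"
    using \<gamma>(2) by (simp add: zero_le_mult_iff)
  then show ?thesis
    using V_ge[of t] by linarith
qed

lemma clip_bellman_fixpoint_le:
  assumes Q: "stochastic_kernel Q" and \<gamma>: "0 \<le> \<gamma>" "\<gamma> < 1"
    and r: "\<And>t a. r t a \<le> 1" and V: "clip M (bellman r Q \<gamma> V) = V"
  shows "V t \<le> 1 / (1 - \<gamma>)"
proof -
  have "(MAX t. V t) \<in> range V"
    by simp
  then obtain t1 where t1: "(MAX t. V t) = V t1"
    by blast
  then have V_le: "V t \<le> V t1" for t
    using t1[symmetric] by simp
  have "V t1 \<le> bellman r Q \<gamma> V t1"
    using fun_cong[OF V, of t1] unfolding clip_def by (metis min.cobounded1)
  also have "\<dots> \<le> 1 + \<gamma> * V t1"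
    using Q \<gamma>(1) r V_le by (rule bellman_le)
  finally have "V t1 * (1 - \<gamma>) \<le> 1"
    by (simp add: algebra_simps)
  moreover have "V t * (1 - \<gamma>) \<le> V t1 * (1 - \<gamma>)"
    using V_le \<gamma>(2) by (intro mult_right_mono) auto
  ultimately have "V t * (1 - \<gamma>) \<le> 1"
    by linarith
  then show ?thesis
    using \<gamma>(2) by (simp add: pos_le_divide_eq)
qed

lemma ustar_in_unit_interval:
  assumes Q: "stochastic_kernel Q" and \<gamma>: "0 \<le> \<gamma>" "\<gamma> < 1" and "0 \<le> M"
    and r: "\<And>t a. 0 \<le> r t a \<and> r t a \<le> 1" and V: "clip M (bellman r Q \<gamma> V) = V"
  shows "bellman r Q \<gamma> V s - \<gamma> * V s \<in> {0..1}"
proof -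
  let ?T = "bellman r Q \<gamma> V"
  have V_eq: "V t = min (?T t) (M + (MIN t. ?T t))" for t
    using fun_cong[OF V, of t] by (simp add: clip_def)
  have "0 \<le> V s"
    using Q \<gamma> \<open>0 \<le> M\<close> _ V by (rule clip_bellman_fixpoint_nonneg) (use r in blast)
  then have "\<gamma> * V s \<le> V s"
    using \<gamma> by (intro mult_left_le_one_le) auto
  then have lower: "0 \<le> ?T s - \<gamma> * V s"
    using V_eq[of s] by linarith
  have upper: "?T s - \<gamma> * V s \<le> 1"
  proof (cases "V s = ?T s")
    case True
    have V_le: "V t \<le> 1 / (1 - \<gamma>)" for t
      using Q \<gamma> _ V by (rule clip_bellman_fixpoint_le) (use r in blast)
    have "?T s \<le> 1 + \<gamma> * (1 / (1 - \<gamma>))"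
      using Q \<gamma>(1) _ V_le by (rule bellman_le) (use r in blast)
    then have "(1 - \<gamma>) * ?T s \<le> (1 - \<gamma>) * (1 + \<gamma> * (1 / (1 - \<gamma>)))"
      using \<gamma>(2) by (intro mult_left_mono) auto
    also have "\<dots> = 1"
      using \<gamma>(2) by (simp add: field_simps)
    finally show ?thesis
      using True by (simp add: algebra_simps)
  next
    case False
    then have "V s = M + (MIN t. ?T t)"
      using V_eq[of s] by (simp add: min_def split: if_splits)
    then have V_le: "V t \<le> V s" for t
      using V_eq[of t] by linarith
    have "?T s \<le> 1 + \<gamma> * V s"
      using Q \<gamma>(1) _ V_le by (rule bellman_le) (use r in blast)
    then show ?thesis
      by simp
  qed
  show ?thesis
    using lower upper by simp
qed

lemma bellman_mod_reward_absorb_kernel: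
  "bellman (mod_reward r s u) (absorb_kernel Q s) \<gamma> V t
     = (if t = s then u + \<gamma> * V s else bellman r Q \<gamma> V t)"
proof (cases "t = s")
  case True
  have "absorb_kernel Q s s a t' * V t' = (if t' = s then V s else 0)" for a t'
    by (simp add: absorb_kernel_def)
  then show ?thesis
    using True by (simp add: bellman_def mod_reward_def)
qed (simp add: bellman_def mod_reward_def absorb_kernel_def)

lemma clipped_fix_absorb_kernel_at_ustar:
  assumes Q: "stochastic_kernel Q" and \<gamma>: "0 \<le> \<gamma>" "\<gamma> < 1"
    and V: "V = clipped_fix M (bellman r Q \<gamma>)"
  shows "clipped_fix M (bellman (mod_reward r s (bellman r Q \<gamma> V s - \<gamma> * V s)) (absorb_kernel Q s) \<gamma>) = V"
proof (rule clipped_fix_unique[where \<gamma> = \<gamma>])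
  show "supnorm_contraction \<gamma> (\<lambda>W. clip M
      (bellman (mod_reward r s (bellman r Q \<gamma> V s - \<gamma> * V s)) (absorb_kernel Q s) \<gamma> W))"
    using stochastic_kernel_absorb_kernel[OF Q] \<gamma>(1) by (rule supnorm_contraction_clip_bellman)
  have "bellman (mod_reward r s (bellman r Q \<gamma> V s - \<gamma> * V s)) (absorb_kernel Q s) \<gamma> V
      = bellman r Q \<gamma> V"
    by (simp add: fun_eq_iff bellman_mod_reward_absorb_kernel)
  then show "clip M (bellman (mod_reward r s (bellman r Q \<gamma> V s - \<gamma> * V s)) (absorb_kernel Q s) \<gamma> V) = V"
    using clipped_fix_eq[OF supnorm_contraction_clip_bellman[OF Q \<gamma>(1)] \<gamma>] V by simp
qed (use \<gamma> in auto)

lemma unit_interval_midpoint_approx: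
  assumes N: "N > 0" and u: "0 \<le> u" "u \<le> 1"
  shows "\<exists>k<N. \<bar>u - (2 * real k + 1) / (2 * real N)\<bar> \<le> 1 / (2 * real N)"
proof -
  obtain k where k: "k < N" "real k \<le> u * N" "u * N \<le> real k + 1"
  proof (cases "u < 1")
    case True
    define k where "k = nat \<lfloor>u * N\<rfloor>"
    have k_eq: "real k = of_int \<lfloor>u * N\<rfloor>"
      using u by (simp add: k_def)
    have "\<lfloor>u * N\<rfloor> < int N"
      using True N by (simp add: floor_less_iff)
    then have "k < N"
      using u by (simp add: k_def nat_less_iff)
    moreover have "real k \<le> u * N"
      using k_eq by simp
    moreover have "u * N \<le> real k + 1"
      using k_eq by linarith
    ultimately show ?thesis
      by (rule that)
  next
    case False
    then have "u = 1"
      using u by simp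
    then show ?thesis
      using N by (intro that[of "N - 1"]) (auto simp: of_nat_diff)
  qed
  define mid where "mid = (2 * real k + 1) / (2 * real N)"
  define h where "h = 1 / (2 * real N)"
  have "real k / N \<le> u" "u \<le> (real k + 1) / N"
    using k N by (simp_all add: pos_divide_le_eq pos_le_divide_eq mult.commute)
  moreover have "mid - h = real k / N" "mid + h = (real k + 1) / N"
    using N by (simp_all add: mid_def h_def field_simps)
  ultimately have "\<bar>u - mid\<bar> \<le> h"
    by linarith
  then show ?thesis
    using k(1) unfolding mid_def h_def by blast
qed

lemma unit_interval_midpoint_grid:
  assumes "N > 0"
  shows "\<exists>U. finite U \<and> U \<subseteq> {0..1} \<and> card U = N \<and>
    (\<forall>u\<in>{0..1}. \<exists>v\<in>U. \<bar>u - v\<bar> \<le> 1 / (2 * real N))"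
proof -
  define mid where "mid k = (2 * real k + 1) / (2 * real N)" for k
  have "inj_on mid {..<N}"
    using assms by (auto simp: inj_on_def mid_def)
  then have "card (mid ` {..<N}) = N"
    by (simp add: card_image)
  moreover have "mid ` {..<N} \<subseteq> {0..1}"
    using assms by (auto simp: mid_def)
  moreover have "\<forall>u\<in>{0..1}. \<exists>v\<in>mid ` {..<N}. \<bar>u - v\<bar> \<le> 1 / (2 * real N)"
    using unit_interval_midpoint_approx[OF assms] unfolding mid_def by fastforce
  ultimately show ?thesis
    by blast
qed

lemma map_pmf_pair_Pi_pmf_indep:
  fixes F :: "('i \<Rightarrow> 'b) \<Rightarrow> 'c" and G :: "('i \<Rightarrow> 'b) \<Rightarrow> 'd"
  assumes "finite I" "A \<subseteq> I"
    and F: "\<And>f g. (\<And>x. x \<notin> A \<Longrightarrow> f x = g x) \<Longrightarrow> F f = F g"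
    and G: "\<And>f g. (\<And>x. x \<in> A \<Longrightarrow> f x = g x) \<Longrightarrow> G f = G g"
  shows "map_pmf (\<lambda>f. (F f, G f)) (Pi_pmf I dflt p)
    = pair_pmf (map_pmf F (Pi_pmf I dflt p)) (map_pmf G (Pi_pmf I dflt p))"
proof -
  define h :: "('i \<Rightarrow> 'b) \<times> ('i \<Rightarrow> 'b) \<Rightarrow> 'i \<Rightarrow> 'b"
    where "h = (\<lambda>(f, g) x. if x \<in> A then f x else g x)"
  define PP where "PP = pair_pmf (Pi_pmf A dflt p) (Pi_pmf (I - A) dflt p)"
  have "Pi_pmf (A \<union> (I - A)) dflt p = map_pmf h PP"
    unfolding h_def PP_def using assms(1,2) by (intro Pi_pmf_union) (auto dest: finite_subset)
  then have Pi: "Pi_pmf I dflt p = map_pmf h PP"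
    using assms(2) by (simp add: Un_absorb1)
  have hF: "F (h fg) = F (snd fg)" and hG: "G (h fg) = G (fst fg)" for fg
    by (auto simp: h_def split: prod.splits intro!: F G)
  have "map_pmf F (Pi_pmf I dflt p) = map_pmf F (Pi_pmf (I - A) dflt p)"
    unfolding Pi map_pmf_comp hF by (simp add: PP_def map_snd_pair_pmf flip: map_pmf_comp)
  moreover have "map_pmf G (Pi_pmf I dflt p) = map_pmf G (Pi_pmf A dflt p)"
    unfolding Pi map_pmf_comp hG by (simp add: PP_def map_fst_pair_pmf flip: map_pmf_comp)
  moreover have "map_pmf (\<lambda>f. (F f, G f)) (Pi_pmf I dflt p)
      = map_pmf (\<lambda>(x, y). (F x, G y)) (pair_pmf (Pi_pmf (I - A) dflt p) (Pi_pmf A dflt p))"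
    unfolding Pi map_pmf_comp hF hG PP_def
    by (subst pair_commute_pmf) (simp add: map_pmf_comp case_prod_unfold)
  ultimately show ?thesis
    by (simp add: map_pair)
qed

lemma V_star_fixpoint:
  assumes "n > 0" "0 \<le> \<gamma>" "\<gamma> < 1"
  shows "clip M (bellman r (emp_kernel n \<omega>) \<gamma> (V_star n r \<gamma> M \<omega>)) = V_star n r \<gamma> M \<omega>"
  unfolding V_star_def
  using supnorm_contraction_clip_bellman[OF stochastic_kernel_emp_kernel[OF assms(1)] assms(2)] assms(2,3)
  by (rule clipped_fix_eq)

lemma V_su_lipschitz:
  assumes "n > 0" "0 \<le> \<gamma>" "\<gamma> < 1"
  shows "supnorm (\<lambda>x. V_su n r \<gamma> M \<omega> s u x - V_su n r \<gamma> M \<omega> s u' x) \<le> \<bar>u - u'\<bar> / (1 - \<gamma>)"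
  unfolding V_su_def
  using stochastic_kernel_absorb_kernel[OF stochastic_kernel_emp_kernel[OF assms(1)]] assms(2,3)
  by (rule clipped_fix_bellman_reward_lipschitz) (simp add: mod_reward_def)

lemma V_su_ustar:
  assumes n: "n > 0" and r: "\<And>t a. 0 \<le> r t a \<and> r t a \<le> 1" and \<gamma>: "0 \<le> \<gamma>" "\<gamma> < 1"
    and "0 \<le> M"
  shows "let ustar = bellman r (emp_kernel n \<omega>) \<gamma> (V_star n r \<gamma> M \<omega>) s - \<gamma> * V_star n r \<gamma> M \<omega> s
    in ustar \<in> {0..1} \<and> V_su n r \<gamma> M \<omega> s ustar = V_star n r \<gamma> M \<omega>"
  unfolding Let_def
proof
  show "bellman r (emp_kernel n \<omega>) \<gamma> (V_star n r \<gamma> M \<omega>) s - \<gamma> * V_star n r \<gamma> M \<omega> s \<in> {0..1}"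
    using stochastic_kernel_emp_kernel[OF n] \<gamma> \<open>0 \<le> M\<close> r V_star_fixpoint[OF n \<gamma>]
    by (rule ustar_in_unit_interval)
  show "V_su n r \<gamma> M \<omega> s (bellman r (emp_kernel n \<omega>) \<gamma> (V_star n r \<gamma> M \<omega>) s - \<gamma> * V_star n r \<gamma> M \<omega> s)
      = V_star n r \<gamma> M \<omega>"
    unfolding V_su_def using stochastic_kernel_emp_kernel[OF n] \<gamma> V_star_def
    by (rule clipped_fix_absorb_kernel_at_ustar)
qed

lemma V_star_grid_approx:
  assumes n: "n > 0" and r: "\<And>t a. 0 \<le> r t a \<and> r t a \<le> 1" and \<gamma>: "0 \<le> \<gamma>" "\<gamma> < 1"
    and "0 \<le> M" and "\<epsilon> > 0"
  shows "\<exists>U. finite U \<and> U \<subseteq> {0..1} \<and> card U = nat \<lceil>1 / (2 * (1 - \<gamma>) * \<epsilon>)\<rceil> \<and>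
    (\<forall>\<omega> s. \<exists>u\<in>U. supnorm (\<lambda>x. V_star n r \<gamma> M \<omega> x - V_su n r \<gamma> M \<omega> s u x) \<le> \<epsilon>)"
proof -
  define N where "N = nat \<lceil>1 / (2 * (1 - \<gamma>) * \<epsilon>)\<rceil>"
  have "0 < 1 / (2 * (1 - \<gamma>) * \<epsilon>)"
    using \<gamma> \<open>\<epsilon> > 0\<close> by simp
  then have "N > 0" "1 / (2 * (1 - \<gamma>) * \<epsilon>) \<le> real N"
    unfolding N_def by linarith+
  then have mesh: "1 / (2 * real N) \<le> (1 - \<gamma>) * \<epsilon>"
    using \<gamma> \<open>\<epsilon> > 0\<close> by (simp add: field_simps)
  obtain U where U: "finite U" "U \<subseteq> {0..1}" "card U = N"
    and cover: "\<And>u. u \<in> {0..1} \<Longrightarrow> \<exists>v\<in>U. \<bar>u - v\<bar> \<le> 1 / (2 * real N)"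
    using unit_interval_midpoint_grid[OF \<open>N > 0\<close>] by blast
  have "\<exists>v\<in>U. supnorm (\<lambda>x. V_star n r \<gamma> M \<omega> x - V_su n r \<gamma> M \<omega> s v x) \<le> \<epsilon>" for \<omega> s
  proof -
    define u where "u = bellman r (emp_kernel n \<omega>) \<gamma> (V_star n r \<gamma> M \<omega>) s - \<gamma> * V_star n r \<gamma> M \<omega> s"
    have u: "u \<in> {0..1}" "V_su n r \<gamma> M \<omega> s u = V_star n r \<gamma> M \<omega>"
      using V_su_ustar[where r = r, OF n r \<gamma> \<open>0 \<le> M\<close>, of \<omega> s] unfolding u_def Let_def by auto
    then obtain v where "v \<in> U" and v: "\<bar>u - v\<bar> \<le> (1 - \<gamma>) * \<epsilon>"
      using cover mesh by force
    have "supnorm (\<lambda>x. V_su n r \<gamma> M \<omega> s u x - V_su n r \<gamma> M \<omega> s v x) \<le> \<bar>u - v\<bar> / (1 - \<gamma>)"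
      using n \<gamma> by (rule V_su_lipschitz)
    also have "\<dots> \<le> \<epsilon>"
      using v \<gamma> by (simp add: pos_divide_le_eq mult.commute)
    finally show ?thesis
      using u(2) \<open>v \<in> U\<close> by auto
  qed
  with U show ?thesis
    unfolding N_def by blast
qed

lemma V_su_cong:
  assumes "\<And>s' a i. s' \<noteq> s \<Longrightarrow> \<omega> (s', a, i) = \<omega>' (s', a, i)"
  shows "V_su n r \<gamma> M \<omega> s u = V_su n r \<gamma> M \<omega>' s u"
proof -
  have "absorb_kernel (emp_kernel n \<omega>) s = absorb_kernel (emp_kernel n \<omega>') s"
    using assms by (auto simp: fun_eq_iff absorb_kernel_def emp_kernel_def)
  then show ?thesis
    unfolding V_su_def by simp
qed

lemma V_su_indep_samples_at:
  fixes P :: "'s::finite \<Rightarrow> 'a::finite \<Rightarrow> 's pmf"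
  shows "map_pmf (\<lambda>\<omega>. (V_su n r \<gamma> M \<omega> s u, map (\<lambda>i. \<omega> (s, a, i)) [0..<n])) (samples_pmf n P)
     = pair_pmf (map_pmf (\<lambda>\<omega>. V_su n r \<gamma> M \<omega> s u) (samples_pmf n P))
                (map_pmf (\<lambda>\<omega>. map (\<lambda>i. \<omega> (s, a, i)) [0..<n]) (samples_pmf n P))"
  unfolding samples_pmf_def
proof (rule map_pmf_pair_Pi_pmf_indep[where A = "{(s', a', i). s' = s \<and> i < n}"])
  have "{(s', a', i). i < n} = (UNIV :: 's set) \<times> (UNIV :: 'a set) \<times> {..<n}"
    by auto
  then show "finite {(s' :: 's, a' :: 'a, i). i < n}"
    by simp
  show "V_su n r \<gamma> M f s u = V_su n r \<gamma> M g s u"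
    if "\<And>x. x \<notin> {(s', a', i). s' = s \<and> i < n} \<Longrightarrow> f x = g x" for f g
    using that by (intro V_su_cong) blast
qed auto

theorem lemma20:
  fixes P :: "'s::finite \<Rightarrow> 'a::finite \<Rightarrow> 's pmf"
    and r :: "'s \<Rightarrow> 'a \<Rightarrow> real"
    and \<gamma> M :: real and n :: nat and s :: 's
  assumes r_range: "\<And>x b. 0 \<le> r x b \<and> r x b \<le> 1"
    and gamma: "0 < \<gamma>" "\<gamma> < 1"
    and M: "M > 0"
    and n: "n > 0"
  shows
    "(\<forall>\<omega> u u'. u \<in> {0..1} \<longrightarrow> u' \<in> {0..1} \<longrightarrow>
        supnorm (\<lambda>x. V_su n r \<gamma> M \<omega> s u x - V_su n r \<gamma> M \<omega> s u' x) \<le> \<bar>u - u'\<bar> / (1 - \<gamma>))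
   \<and> (\<forall>\<omega>. let ustar = bellman r (emp_kernel n \<omega>) \<gamma> (V_star n r \<gamma> M \<omega>) s
                       - \<gamma> * V_star n r \<gamma> M \<omega> s
          in ustar \<in> {0..1} \<and> V_su n r \<gamma> M \<omega> s ustar = V_star n r \<gamma> M \<omega>)
   \<and> (\<forall>\<epsilon>>0. \<exists>U. finite U \<and> U \<subseteq> {0..1} \<and> card U = nat \<lceil>1 / (2 * (1 - \<gamma>) * \<epsilon>)\<rceil> \<and>
        (AE \<omega> in measure_pmf (samples_pmf n P).
           \<forall>s'. \<exists>u\<in>U. supnorm (\<lambda>x. V_star n r \<gamma> M \<omega> x - V_su n r \<gamma> M \<omega> s' u x) \<le> \<epsilon>))
   \<and> (\<forall>u\<in>{0..1}. \<forall>a.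
        map_pmf (\<lambda>\<omega>. (V_su n r \<gamma> M \<omega> s u, map (\<lambda>i. \<omega> (s, a, i)) [0..<n])) (samples_pmf n P)
        = pair_pmf (map_pmf (\<lambda>\<omega>. V_su n r \<gamma> M \<omega> s u) (samples_pmf n P))
                   (map_pmf (\<lambda>\<omega>. map (\<lambda>i. \<omega> (s, a, i)) [0..<n]) (samples_pmf n P)))"
proof -
  have \<gamma>: "0 \<le> \<gamma>" "\<gamma> < 1" and "0 \<le> M"
    using gamma M by simp_all
  have grid: "\<exists>U. finite U \<and> U \<subseteq> {0..1} \<and> card U = nat \<lceil>1 / (2 * (1 - \<gamma>) * \<epsilon>)\<rceil> \<and>
      (AE \<omega> in measure_pmf (samples_pmf n P).
        \<forall>s'. \<exists>u\<in>U. supnorm (\<lambda>x. V_star n r \<gamma> M \<omega> x - V_su n r \<gamma> M \<omega> s' u x) \<le> \<epsilon>)"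
    if "\<epsilon> > 0" for \<epsilon>
    using V_star_grid_approx[where r = r, OF n r_range \<gamma> \<open>0 \<le> M\<close> that] by (auto intro: AE_I2)
  show ?thesis
    by (intro conjI allI impI ballI grid V_su_lipschitz[OF n \<gamma>]
        V_su_ustar[where r = r, OF n r_range \<gamma> \<open>0 \<le> M\<close>] V_su_indep_samples_at)
qed

end
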